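(* Let $\Sigma$ be a $d\times d$ positive definite matrix, $i\in[d]$, $(\mu_1,\dots,\mu_d)\in\mathbb{R}^d$ and $\mu_i'\in\mathbb{R}$. Let $Q=\mathcal{N}((\mu_1,\dots,\mu_d),\Sigma)$ and $Q'=\mathcal{N}((\mu_1,\dots,\mu_{i-1},\mu_i',\mu_{i+1},\dots,\mu_d),\Sigma)$. There exists a coupling $\Pi$ of $Q$ and $Q'$ such that $\Pr_{(X,X')\sim\Pi}[X_i\neq X_i']=D_{\mathrm{TV}}(Q,Q')$ and $\Pr_{(X,X')\sim\Pi}[X_j\neq X_j']=0$ for all $j\neq i$.
   Context: $D_{\mathrm{TV}}$ denotes total variation distance. A coupling of distributions $P,Q$ is a joint distribution with marginals $P$ and $Q$. *)

theory Defs
  imports "HOL-Probability.Probability"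
begin

definition pos_def_matrix :: "real^'n^'n \<Rightarrow> bool" where
  "pos_def_matrix S \<longleftrightarrow> transpose S = S \<and> (\<forall>x. x \<noteq> 0 \<longrightarrow> x \<bullet> (S *v x) > 0)"

definition mvn_density :: "real^'n \<Rightarrow> real^'n^'n \<Rightarrow> real^'n \<Rightarrow> real" where
  "mvn_density mu S x =
     exp (- (1/2) * ((x - mu) \<bullet> (matrix_inv S *v (x - mu))))
     / sqrt ((2 * pi) ^ CARD('n) * det S)"

definition mvn :: "real^'n \<Rightarrow> real^'n^'n \<Rightarrow> (real^'n) measure" where
  "mvn mu S = density lborel (\<lambda>x. ennreal (mvn_density mu S x))"

definition tv_dist :: "'a measure \<Rightarrow> 'a measure \<Rightarrow> real" where
  "tv_dist P Q = (SUP A \<in> sets P. \<bar>measure P A - measure Q A\<bar>)"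

definition coupling :: "('a \<times> 'b) measure \<Rightarrow> 'a measure \<Rightarrow> 'b measure \<Rightarrow> bool" where
  "coupling C P Q \<longleftrightarrow> prob_space C \<and> sets C = sets (P \<Otimes>\<^sub>M Q)
      \<and> distr C P fst = P \<and> distr C Q snd = Q"

end

theory Submission
  imports Defs
begin

text \<open>
Write \<open>P = \<Sigma>\<inverse>\<close>, \<open>e\<close> for the \<open>i\<close>-th unit vector and \<open>\<mu>'\<close> for the shifted mean. The affine
reflection \<open>R\<close> in the hyperplane through \<open>(\<mu> + \<mu>')/2\<close> that is orthogonal to \<open>e\<close> for the inner
product \<open>\<langle>x, y\<rangle> = x \<bullet> P y\<close> is an involution, an isometry of the Mahalanobis form, swaps \<open>\<mu>\<close> and
\<open>\<mu>'\<close> and moves only the \<open>i\<close>-th coordinate. Hence it carries the density \<open>f\<close> of \<open>Q\<close> to the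
density \<open>g\<close> of \<open>Q'\<close> and, having Jacobian \<open>\<plusminus>1\<close>, preserves Lebesgue measure. The maximal coupling
keeps \<open>X' = X\<close> on the common part \<open>min f g\<close> and sets \<open>X' = R X\<close> on the excess \<open>(f - g)\<^sup>+\<close>:
coordinates other than \<open>i\<close> then never differ, while coordinate \<open>i\<close> differs exactly on the
excess, whose mass is \<open>D\<^sub>T\<^sub>V(Q, Q')\<close>.
\<close>

section \<open>Linear change of variables on \<open>real^'n\<close>\<close>

text \<open>
The change-of-variables theorems of \<open>Change_Of_Vars\<close> assume a well-ordered index type; for an
arbitrary finite \<open>'n\<close> the formula follows from Fubini along one coordinate and elementary
matrices.
\<close>

lemma nn_integral_lborel_affine_along_Basis:
  fixes f :: "'a::euclidean_space \<Rightarrow> ennreal" and e :: 'a and \<phi> :: "'a \<Rightarrow> real"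
  assumes e: "e \<in> Basis" and c: "c \<noteq> 0"
    and [measurable]: "f \<in> borel_measurable borel" "\<phi> \<in> borel_measurable borel"
    and \<phi>: "\<And>x t. \<phi> (x + t *\<^sub>R e) = \<phi> x"
  shows "(\<integral>\<^sup>+x. f x \<partial>lborel) = ennreal \<bar>c\<bar> * (\<integral>\<^sup>+x. f (x + ((c - 1) * (x \<bullet> e) + \<phi> x) *\<^sub>R e) \<partial>lborel)"
proof -
  interpret product_sigma_finite "\<lambda>_::'a. lborel :: real measure"
    by (simp add: product_sigma_finite_def lborel.sigma_finite_measure_axioms)
  define B where "B = Basis - {e}"
  have B: "Basis = insert e B" "e \<notin> B" "finite B"
    using e by (auto simp: B_def)
  define w where "w v = (\<Sum>b\<in>B. v b *\<^sub>R b)" for v :: "'a \<Rightarrow> real"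
  have w_e: "w v \<bullet> e = 0" for v
    using e by (auto simp: w_def B_def inner_sum_left inner_Basis intro!: sum.neutral)
  have [measurable]: "w \<in> borel_measurable (Pi\<^sub>M B (\<lambda>_. lborel))"
    unfolding w_def by measurable
  have fubini: "(\<integral>\<^sup>+x. F x \<partial>lborel) = (\<integral>\<^sup>+v. \<integral>\<^sup>+y. F (y *\<^sub>R e + w v) \<partial>lborel \<partial>Pi\<^sub>M B (\<lambda>_. lborel))"
    if [measurable]: "F \<in> borel_measurable borel" for F
  proof -
    have "(\<Sum>b\<in>Basis. (v(e := y)) b *\<^sub>R b) = y *\<^sub>R e + w v" for v y
      unfolding B(1) w_def using B(2,3) by (auto intro!: sum.cong)
    then show ?thesis
      by (subst lborel_eq) (simp add: nn_integral_distr B(1) product_nn_integral_insert[OF B(3,2)])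
  qed
  have shift: "(\<integral>\<^sup>+y. f (y *\<^sub>R e + w v) \<partial>lborel)
      = \<bar>c\<bar> * (\<integral>\<^sup>+y. f (y *\<^sub>R e + w v + ((c - 1) * ((y *\<^sub>R e + w v) \<bullet> e) + \<phi> (y *\<^sub>R e + w v)) *\<^sub>R e) \<partial>lborel)"
    for v
  proof -
    have "y *\<^sub>R e + w v + ((c - 1) * ((y *\<^sub>R e + w v) \<bullet> e) + \<phi> (y *\<^sub>R e + w v)) *\<^sub>R e
        = (\<phi> (w v) + c * y) *\<^sub>R e + w v" for y
      using \<phi>[of "w v" y] e by (simp add: inner_add_left w_e add.commute algebra_simps)
    moreover have "(\<integral>\<^sup>+y. f (y *\<^sub>R e + w v) \<partial>lborel)
        = \<bar>c\<bar> * (\<integral>\<^sup>+y. f ((\<phi> (w v) + c * y) *\<^sub>R e + w v) \<partial>lborel)"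
      by (rule nn_integral_real_affine[OF _ c]) measurable
    ultimately show ?thesis
      by presburger
  qed
  show ?thesis
    by (simp add: fubini shift nn_integral_cmult)
qed

corollary nn_integral_lborel_shear_along_Basis:
  fixes f :: "'a::euclidean_space \<Rightarrow> ennreal"
  assumes "e \<in> Basis" "f \<in> borel_measurable borel" "\<phi> \<in> borel_measurable borel"
    and "\<And>x t. \<phi> (x + t *\<^sub>R e) = \<phi> x"
  shows "(\<integral>\<^sup>+x. f x \<partial>lborel) = (\<integral>\<^sup>+x. f (x + \<phi> x *\<^sub>R e) \<partial>lborel)"
  using nn_integral_lborel_affine_along_Basis[of e 1 f \<phi>] assms by simp

corollary nn_integral_lborel_reflect_along_Basis:
  fixes f :: "'a::euclidean_space \<Rightarrow> ennreal"
  assumes "e \<in> Basis" "f \<in> borel_measurable borel"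
  shows "(\<integral>\<^sup>+x. f x \<partial>lborel) = (\<integral>\<^sup>+x. f (x - (2 * (x \<bullet> e)) *\<^sub>R e) \<partial>lborel)"
  using nn_integral_lborel_affine_along_Basis[of e "-1" f "\<lambda>_. 0"] assms by (simp add: scaleR_diff_left)

lemma linear_borel_measurable [measurable (raw)]:
  fixes g :: "'a::euclidean_space \<Rightarrow> 'b::euclidean_space"
  shows "linear g \<Longrightarrow> g \<in> borel_measurable borel"
  by (intro borel_measurable_continuous_onI linear_continuous_on) (simp add: linear_conv_bounded_linear)

lemma abs_det_matrix_involution:
  fixes g :: "real^'n \<Rightarrow> real^'n"
  assumes "linear g" and "\<And>x. g (g x) = x"
  shows "\<bar>det (matrix g)\<bar> = 1"
proof -
  have "g \<circ> g = id"
    using assms(2) by auto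
  then have "matrix g ** matrix g = mat 1"
    by (metis matrix_compose assms(1) matrix_id_mat_1)
  then have "det (matrix g) ^ 2 = 1"
    by (metis det_I det_mul power2_eq_square)
  then show ?thesis
    by (auto simp: power2_eq_1_iff)
qed

lemma nn_integral_lborel_shear_coordinates:
  fixes f :: "real^'n \<Rightarrow> ennreal"
  assumes "f \<in> borel_measurable borel" and "m \<noteq> n"
  shows "(\<integral>\<^sup>+x. f x \<partial>lborel) = (\<integral>\<^sup>+x. f (\<chi> i. if i = m then x $ m + x $ n else x $ i) \<partial>lborel)"
proof -
  have "(\<chi> i. if i = m then x $ m + x $ n else x $ i) = x + (x $ n) *\<^sub>R axis m 1" for x :: "real^'n"
    using \<open>m \<noteq> n\<close> by (simp add: vec_eq_iff axis_def)
  moreover have "(x + t *\<^sub>R axis m 1) $ n = x $ n" for x :: "real^'n" and t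
    using \<open>m \<noteq> n\<close> by (simp add: axis_def)
  ultimately show ?thesis
    using nn_integral_lborel_shear_along_Basis[of "axis m 1" f "\<lambda>x. x $ n"] assms(1) by simp
qed

lemma det_matrix_shear_coordinates:
  assumes "m \<noteq> n"
  shows "det (matrix (\<lambda>x::real^'n. \<chi> i. if i = m then x $ m + x $ n else x $ i)) = 1"
proof -
  have "matrix (\<lambda>x::real^'n. \<chi> i. if i = m then x $ m + x $ n else x $ i)
      = (\<chi> k. if k = m then row m (mat 1) + 1 *s row n (mat 1) else row k (mat 1))"
    using assms by (auto simp: matrix_def axis_def row_def mat_def vec_eq_iff)
  then show ?thesis
    using det_row_operation[OF assms, where c=1 and A="mat 1 :: real^'n^'n"] by simp
qed

text \<open>A transposition of coordinates is a composition of three shears and a reflection.\<close>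

lemma nn_integral_lborel_swap_coordinates:
  fixes f :: "real^'n \<Rightarrow> ennreal"
  assumes [measurable]: "f \<in> borel_measurable borel" and "m \<noteq> n"
  shows "(\<integral>\<^sup>+x. f x \<partial>lborel) = (\<integral>\<^sup>+x. f (\<chi> i. x $ Transposition.transpose m n i) \<partial>lborel)"
proof -
  let ?em = "axis m 1 :: real^'n" and ?en = "axis n 1 :: real^'n"
  have em: "?em \<in> Basis" and en: "?en \<in> Basis"
    by simp_all
  define sm where "sm x = x + (x $ n) *\<^sub>R ?em" for x :: "real^'n"
  define sn where "sn x = x + (- (x $ m)) *\<^sub>R ?en" for x :: "real^'n"
  define r where "r x = x - (2 * (x \<bullet> ?en)) *\<^sub>R ?en" for x :: "real^'n"
  have [measurable]: "sm \<in> borel_measurable borel" "sn \<in> borel_measurable borel" "r \<in> borel_measurable borel"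
    unfolding sm_def sn_def r_def by measurable
  have "(\<integral>\<^sup>+x. f x \<partial>lborel) = (\<integral>\<^sup>+x. f (r x) \<partial>lborel)"
    unfolding r_def by (rule nn_integral_lborel_reflect_along_Basis[OF en]) measurable
  also have "\<dots> = (\<integral>\<^sup>+x. f (r (sm x)) \<partial>lborel)"
    using nn_integral_lborel_shear_along_Basis[OF em, of "\<lambda>x. f (r x)" "\<lambda>x. x $ n"] \<open>m \<noteq> n\<close>
    by (simp add: sm_def axis_def)
  also have "\<dots> = (\<integral>\<^sup>+x. f (r (sm (sn x))) \<partial>lborel)"
    using nn_integral_lborel_shear_along_Basis[OF en, of "\<lambda>x. f (r (sm x))" "\<lambda>x. - x $ m"] \<open>m \<noteq> n\<close>
    by (simp add: sn_def axis_def)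
  also have "\<dots> = (\<integral>\<^sup>+x. f (r (sm (sn (sm x)))) \<partial>lborel)"
    using nn_integral_lborel_shear_along_Basis[OF em, of "\<lambda>x. f (r (sm (sn x)))" "\<lambda>x. x $ n"] \<open>m \<noteq> n\<close>
    by (simp add: sm_def axis_def)
  also have "\<dots> = (\<integral>\<^sup>+x. f (\<chi> i. x $ Transposition.transpose m n i) \<partial>lborel)"
  proof -
    have "r (sm (sn (sm x))) = (\<chi> i. x $ Transposition.transpose m n i)" for x
      using \<open>m \<noteq> n\<close> unfolding r_def inner_axis
      by (simp add: sm_def sn_def vec_eq_iff axis_def Transposition.transpose_def)
    then show ?thesis
      by simp
  qed
  finally show ?thesis .
qed

lemma Basis_cart_real: "(Basis :: (real^'n) set) = range (\<lambda>i. axis i 1)"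
  by (auto simp: Basis_vec_def)

lemma nn_integral_lborel_stretch:
  fixes f :: "real^'n \<Rightarrow> ennreal" and c :: "'n \<Rightarrow> real"
  assumes [measurable]: "f \<in> borel_measurable borel" and c: "\<And>i. c i \<noteq> 0"
  shows "(\<integral>\<^sup>+x. f x \<partial>lborel) = ennreal (\<Prod>i\<in>UNIV. \<bar>c i\<bar>) * (\<integral>\<^sup>+x. f (\<chi> i. c i * x $ i) \<partial>lborel)"
proof -
  define v :: "real^'n" where "v = (\<chi> i. c i)"
  have inj: "inj (\<lambda>i::'n. axis i (1::real))"
    by (auto intro: injI simp: axis_eq_axis)
  have v: "\<And>b. b \<in> Basis \<Longrightarrow> v \<bullet> b \<noteq> 0"
    using c by (auto simp: Basis_cart_real v_def inner_axis)
  have T: "(\<Sum>b\<in>Basis. ((v \<bullet> b) * (x \<bullet> b)) *\<^sub>R b) = (\<chi> i. c i * x $ i)" for x :: "real^'n"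
    unfolding Basis_cart_real sum.reindex[OF inj] o_def inner_axis
    by (simp add: v_def vec_eq_iff axis_def if_distrib cong: if_cong)
  have P: "(\<Prod>b\<in>Basis. \<bar>v \<bullet> b\<bar>) = (\<Prod>i\<in>UNIV. \<bar>c i\<bar>)"
    by (simp add: Basis_cart_real prod.reindex[OF inj] inner_axis v_def)
  show ?thesis
    by (subst lborel_affine_euclidean[OF v, where t=0])
       (simp_all add: nn_integral_density nn_integral_distr nn_integral_cmult prod_nonneg, simp only: T P)
qed

lemma det_matrix_stretch: "det (matrix (\<lambda>x::real^'n. \<chi> i. c i * x $ i)) = (\<Prod>i\<in>UNIV. c i)"
  by (subst det_diagonal) (simp_all add: matrix_def axis_def)

lemma abs_det_matrix_swap_coordinates:
  "\<bar>det (matrix (\<lambda>x::real^'n. \<chi> i. x $ Transposition.transpose m n i))\<bar> = 1"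
proof (rule abs_det_matrix_involution)
  show "linear (\<lambda>x::real^'n. \<chi> i. x $ Transposition.transpose m n i)"
    by (rule linearI) (simp_all add: vec_eq_iff)
qed (simp add: vec_eq_iff)

lemma nn_integral_lborel_linear_comp:
  fixes g h :: "real^'n \<Rightarrow> real^'n"
  assumes "linear g" "linear h" and [measurable]: "f \<in> borel_measurable borel"
    and g: "\<And>f. f \<in> borel_measurable borel \<Longrightarrow>
      (\<integral>\<^sup>+x. f x \<partial>lborel) = ennreal \<bar>det (matrix g)\<bar> * (\<integral>\<^sup>+x. f (g x) \<partial>lborel)"
    and h: "\<And>f. f \<in> borel_measurable borel \<Longrightarrow>
      (\<integral>\<^sup>+x. f x \<partial>lborel) = ennreal \<bar>det (matrix h)\<bar> * (\<integral>\<^sup>+x. f (h x) \<partial>lborel)"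
  shows "(\<integral>\<^sup>+x. f x \<partial>lborel) = ennreal \<bar>det (matrix (g \<circ> h))\<bar> * (\<integral>\<^sup>+x. f ((g \<circ> h) x) \<partial>lborel)"
proof -
  have "(\<lambda>x. f (g x)) \<in> borel_measurable borel"
    using \<open>linear g\<close> by measurable
  then have "(\<integral>\<^sup>+x. f x \<partial>lborel)
      = ennreal \<bar>det (matrix g)\<bar> * (ennreal \<bar>det (matrix h)\<bar> * (\<integral>\<^sup>+x. f (g (h x)) \<partial>lborel))"
    using g[of f] h[of "\<lambda>x. f (g x)"] by simp
  then show ?thesis
    by (simp add: matrix_compose[OF assms(2,1)] det_mul abs_mult ennreal_mult mult.assoc)
qed

lemma nn_integral_lborel_linear:
  fixes g :: "real^'n \<Rightarrow> real^'n" and f :: "real^'n \<Rightarrow> ennreal"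
  assumes "linear g" and "det (matrix g) \<noteq> 0" and "f \<in> borel_measurable borel"
  shows "(\<integral>\<^sup>+x. f x \<partial>lborel) = ennreal \<bar>det (matrix g)\<bar> * (\<integral>\<^sup>+x. f (g x) \<partial>lborel)"
proof -
  let ?P = "\<lambda>g. det (matrix g) \<noteq> 0 \<longrightarrow> (\<forall>f \<in> borel_measurable borel.
     (\<integral>\<^sup>+x. f x \<partial>lborel) = ennreal \<bar>det (matrix g)\<bar> * (\<integral>\<^sup>+x. f (g x) \<partial>lborel))"
  have "?P g"
  proof (rule induct_linear_elementary[OF \<open>linear g\<close>])
    fix g h :: "real^'n \<Rightarrow> real^'n"
    assume lin: "linear g" "linear h" and Pg: "?P g" and Ph: "?P h"
    show "?P (g \<circ> h)"
    proof (intro impI ballI)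
      fix f :: "real^'n \<Rightarrow> ennreal"
      assume "det (matrix (g \<circ> h)) \<noteq> 0" and f: "f \<in> borel_measurable borel"
      then have "det (matrix g) \<noteq> 0" "det (matrix h) \<noteq> 0"
        by (simp_all add: matrix_compose[OF lin(2,1)] det_mul)
      with Pg Ph show "(\<integral>\<^sup>+x. f x \<partial>lborel) = ennreal \<bar>det (matrix (g \<circ> h))\<bar> * (\<integral>\<^sup>+x. f ((g \<circ> h) x) \<partial>lborel)"
        by (intro nn_integral_lborel_linear_comp[OF lin f]) blast+
    qed
  next
    fix g :: "real^'n \<Rightarrow> real^'n" and i
    assume "\<And>x. g x $ i = 0"
    then have "row i (matrix g) = 0"
      by (simp add: row_def matrix_def vec_eq_iff)
    then show "?P g"
      by (simp add: det_zero_row)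
  next
    fix c :: "'n \<Rightarrow> real"
    show "?P (\<lambda>x. \<chi> i. c i * x $ i)"
      using nn_integral_lborel_stretch[of _ c] by (simp add: det_matrix_stretch abs_prod)
  next
    fix m n :: 'n
    assume "m \<noteq> n"
    then show "?P (\<lambda>x. \<chi> i. x $ Transposition.transpose m n i)"
      using nn_integral_lborel_swap_coordinates[OF _ \<open>m \<noteq> n\<close>] abs_det_matrix_swap_coordinates[of m n]
      by simp
  next
    fix m n :: 'n
    assume "m \<noteq> n"
    show "?P (\<lambda>x. \<chi> i. if i = m then x $ m + x $ n else x $ i)"
      using nn_integral_lborel_shear_coordinates[OF _ \<open>m \<noteq> n\<close>]
      unfolding det_matrix_shear_coordinates[OF \<open>m \<noteq> n\<close>] by (simp only: abs_one ennreal_1 mult_1) blast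
  qed
  then show ?thesis
    using assms by blast
qed

corollary nn_integral_lborel_affine:
  fixes g :: "real^'n \<Rightarrow> real^'n" and f :: "real^'n \<Rightarrow> ennreal"
  assumes "linear g" and "det (matrix g) \<noteq> 0" and [measurable]: "f \<in> borel_measurable borel"
  shows "(\<integral>\<^sup>+x. f x \<partial>lborel) = ennreal \<bar>det (matrix g)\<bar> * (\<integral>\<^sup>+x. f (t + g x) \<partial>lborel)"
proof -
  have "(\<integral>\<^sup>+x. f x \<partial>lborel) = (\<integral>\<^sup>+x. f (t + x) \<partial>lborel)"
    by (subst lborel_distr_plus[symmetric, of t]) (simp add: nn_integral_distr)
  also have "\<dots> = ennreal \<bar>det (matrix g)\<bar> * (\<integral>\<^sup>+x. f (t + g x) \<partial>lborel)"
    by (rule nn_integral_lborel_linear[OF assms(1,2)]) measurable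
  finally show ?thesis .
qed

section \<open>Positive definite matrices and the Gaussian integral\<close>

lemma symmetric_matrix_inner_commute:
  fixes P :: "real^'n^'n"
  assumes "transpose P = P"
  shows "y \<bullet> (P *v z) = z \<bullet> (P *v y)"
  by (metis assms dot_lmul_matrix inner_commute transpose_matrix_vector)

lemma pos_def_matrix_invertible:
  fixes S :: "real^'n^'n"
  assumes "pos_def_matrix S"
  shows "invertible S"
proof -
  have "inj ((*v) S)"
  proof (rule injI)
    fix x y
    assume "S *v x = S *v y"
    then have "(x - y) \<bullet> (S *v (x - y)) = 0"
      by (simp add: matrix_vector_mult_diff_distrib)
    then show "x = y"
      using assms unfolding pos_def_matrix_def by (metis eq_iff_diff_eq_0 less_irrefl)
  qed
  then show ?thesis
    using det_nz_iff_inj[of "(*v) S"] by (simp add: invertible_det_nz matrix_vector_mul_linear)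
qed

lemma matrix_inv_invertible:
  fixes S :: "real^'n^'n"
  assumes "invertible S"
  shows "S ** matrix_inv S = mat 1" and "matrix_inv S ** S = mat 1"
  using someI_ex[OF assms[unfolded invertible_def]] by (simp_all add: matrix_inv_def)

lemma pos_def_matrix_inv:
  fixes S :: "real^'n^'n"
  assumes "pos_def_matrix S"
  shows "pos_def_matrix (matrix_inv S)"
  unfolding pos_def_matrix_def
proof (intro conjI allI impI)
  let ?P = "matrix_inv S"
  have SP: "S ** ?P = mat 1" and PS: "?P ** S = mat 1"
    using matrix_inv_invertible[OF pos_def_matrix_invertible[OF assms]] by auto
  have "transpose ?P ** S = mat 1"
    using assms by (metis SP matrix_transpose_mul pos_def_matrix_def transpose_mat)
  then have "transpose ?P = transpose ?P ** (S ** ?P)"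
    by (simp add: SP)
  also have "\<dots> = ?P"
    by (simp add: matrix_mul_assoc \<open>transpose ?P ** S = mat 1\<close>)
  finally show "transpose ?P = ?P" .
  fix x :: "real^'n"
  assume "x \<noteq> 0"
  define y where "y = ?P *v x"
  have x: "x = S *v y"
    by (simp add: y_def matrix_vector_mul_assoc SP)
  with \<open>x \<noteq> 0\<close> have "y \<noteq> 0"
    by auto
  then have "y \<bullet> (S *v y) > 0"
    using assms by (simp add: pos_def_matrix_def)
  also have "y \<bullet> (S *v y) = x \<bullet> (?P *v x)"
    unfolding x by (simp add: inner_commute matrix_vector_mul_assoc PS)
  finally show "x \<bullet> (?P *v x) > 0" .
qed

definition form_orthonormal :: "real^'n^'n \<Rightarrow> (real^'n) set \<Rightarrow> bool" where
  "form_orthonormal P Y \<longleftrightarrow> (\<forall>y\<in>Y. \<forall>z\<in>Y. y \<bullet> (P *v z) = (if y = z then 1 else 0))"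

lemma form_orthonormal_residual:
  assumes "form_orthonormal P Y" and "finite Y" and "z \<in> Y"
  shows "(x - (\<Sum>y\<in>Y. (x \<bullet> (P *v y)) *\<^sub>R y)) \<bullet> (P *v z) = 0"
proof -
  have "(\<Sum>y\<in>Y. (x \<bullet> (P *v y)) *\<^sub>R y) \<bullet> (P *v z) = (\<Sum>y\<in>Y. (x \<bullet> (P *v y)) * (if y = z then 1 else 0))"
    using assms(1,3) by (simp add: inner_sum_left form_orthonormal_def)
  also have "\<dots> = x \<bullet> (P *v z)"
    using assms(2,3) by (simp add: if_distrib cong: if_cong)
  finally show ?thesis
    by (simp add: inner_diff_left)
qed

lemma pos_def_matrix_orthonormal_insert:
  fixes P :: "real^'n^'n"
  assumes P: "pos_def_matrix P" and Y: "finite Y" "form_orthonormal P Y"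
  obtains Y' where "finite Y'" "form_orthonormal P Y'" "insert x (span Y) \<subseteq> span Y'"
proof -
  have sym: "transpose P = P" and pos: "\<And>x. x \<noteq> 0 \<Longrightarrow> x \<bullet> (P *v x) > 0"
    using P by (auto simp: pos_def_matrix_def)
  define x' where "x' = x - (\<Sum>y\<in>Y. (x \<bullet> (P *v y)) *\<^sub>R y)"
  have "x - x' \<in> span Y"
    unfolding x'_def by (simp add: span_sum span_scale span_base)
  show ?thesis
  proof (cases "x' = 0")
    case True
    then show ?thesis
      using Y \<open>x - x' \<in> span Y\<close> by (intro that[of Y]) (auto simp: span_base)
  next
    case False
    define c where "c = sqrt (x' \<bullet> (P *v x'))"
    have c: "c > 0" "c * c = x' \<bullet> (P *v x')"
      using pos[OF False] by (auto simp: c_def)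
    define y0 where "y0 = (1 / c) *\<^sub>R x'"
    have y0: "y0 \<bullet> (P *v y0) = 1"
      using c pos[OF False] by (simp add: y0_def matrix_vector_mult_scaleR field_simps)
    have y0z: "y0 \<bullet> (P *v z) = 0" "z \<bullet> (P *v y0) = 0" if "z \<in> Y" for z
      using form_orthonormal_residual[OF Y(2,1) that, of x] symmetric_matrix_inner_commute[OF sym, of z y0]
      by (simp_all add: y0_def x'_def)
    have "x' = c *\<^sub>R y0"
      using c by (simp add: y0_def)
    then have "x' \<in> span (insert y0 Y)"
      by (simp add: span_base span_scale)
    moreover have "span Y \<subseteq> span (insert y0 Y)"
      by (rule span_mono) auto
    moreover have "x = x' + (x - x')"
      by simp
    ultimately have "insert x (span Y) \<subseteq> span (insert y0 Y)"
      using \<open>x - x' \<in> span Y\<close> by (metis insert_subset span_add subset_eq)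
    moreover have "form_orthonormal P (insert y0 Y)"
      using Y(2) y0 y0z by (auto simp: form_orthonormal_def)
    ultimately show ?thesis
      using Y(1) by (intro that[of "insert y0 Y"]) auto
  qed
qed

lemma pos_def_matrix_orthonormal_span:
  fixes P :: "real^'n^'n"
  assumes "pos_def_matrix P" and "finite X"
  obtains Y where "finite Y" "form_orthonormal P Y" "X \<subseteq> span Y"
proof -
  have "\<exists>Y. finite Y \<and> form_orthonormal P Y \<and> X \<subseteq> span Y"
    using \<open>finite X\<close>
  proof induction
    case empty
    show ?case
      by (intro exI[of _ "{}"]) (auto simp: form_orthonormal_def)
  next
    case (insert x X)
    then obtain Y where Y: "finite Y" "form_orthonormal P Y" "X \<subseteq> span Y"
      by blast
    obtain Y' where "finite Y'" "form_orthonormal P Y'" "insert x (span Y) \<subseteq> span Y'"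
      using pos_def_matrix_orthonormal_insert[OF assms(1) Y(1,2)] .
    then show ?case
      using Y(3) by blast
  qed
  then show ?thesis
    using that by blast
qed

lemma pos_def_matrix_congruent_mat_1:
  fixes P :: "real^'n^'n"
  assumes "pos_def_matrix P"
  obtains A :: "real^'n^'n" where "transpose A ** P ** A = mat 1"
proof -
  obtain Y where Y: "finite Y" "form_orthonormal P Y" "Basis \<subseteq> span Y"
    using pos_def_matrix_orthonormal_span[OF assms, of Basis] by auto
  have "span Y = UNIV"
    using Y(3) by (metis span_Basis span_mono span_span top.extremum_uniqueI)
  then have "CARD('n) \<le> card Y"
    using dim_le_card[OF _ Y(1), of UNIV] by simp
  then obtain \<phi> :: "'n \<Rightarrow> real^'n" where \<phi>: "range \<phi> \<subseteq> Y" "inj \<phi>"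
    using card_le_inj[of "UNIV :: 'n set" Y] Y(1) by auto
  define A :: "real^'n^'n" where "A = (\<chi> r c. \<phi> c $ r)"
  have "(transpose A ** P ** A) $ j $ k = \<phi> j \<bullet> (P *v \<phi> k)" for j k
    by (simp add: A_def matrix_matrix_mult_def transpose_def matrix_vector_mult_def inner_vec_def
        sum_distrib_left sum_distrib_right mult.assoc)
       (rule sum.swap)
  also have "\<phi> j \<bullet> (P *v \<phi> k) = mat 1 $ j $ k" for j k
    using \<phi> Y(2) by (auto simp: form_orthonormal_def mat_def inj_eq image_subset_iff)
  finally have "transpose A ** P ** A = mat 1"
    by (simp add: vec_eq_iff)
  then show ?thesis
    by (rule that)
qed

lemma pos_def_matrix_det_pos:
  fixes S :: "real^'n^'n"
  assumes "pos_def_matrix S"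
  shows "det S > 0"
proof -
  obtain A :: "real^'n^'n" where "transpose A ** S ** A = mat 1"
    using pos_def_matrix_congruent_mat_1[OF assms] by blast
  then have "det A * det S * det A = 1"
    by (metis det_I det_mul det_transpose)
  then show ?thesis
    by (metis mult.commute mult.assoc zero_less_mult_iff zero_less_one not_square_less_zero)
qed

lemma det_congruent_inv_mat_1:
  fixes S A :: "real^'n^'n"
  assumes "pos_def_matrix S" and "transpose A ** matrix_inv S ** A = mat 1"
  shows "det S = det A ^ 2"
proof -
  have "det A * det (matrix_inv S) * det A = 1"
    using arg_cong[OF assms(2), of det] by (simp add: det_mul)
  moreover have "det (matrix_inv S) * det S = 1"
    using arg_cong[OF matrix_inv_invertible(2)[OF pos_def_matrix_invertible[OF assms(1)]], of det]
    by (simp add: det_mul)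
  ultimately show ?thesis
    by (metis mult.commute mult.left_commute mult_1_right power2_eq_square)
qed

lemma nn_integral_lborel_exp_neg_inner_half:
  "(\<integral>\<^sup>+z. ennreal (exp (- (z \<bullet> z) / 2)) \<partial>(lborel :: 'a::euclidean_space measure))
     = ennreal (sqrt (2 * pi) ^ DIM('a))"
proof -
  have "ennreal (exp (- (z \<bullet> z) / 2))
      = ennreal (sqrt (2 * pi) ^ DIM('a)) * (\<Prod>b\<in>Basis. ennreal (std_normal_density (z \<bullet> b)))" for z :: 'a
  proof -
    have "exp (- (z \<bullet> z) / 2) = (\<Prod>b\<in>(Basis::'a set). exp (- ((z \<bullet> b)^2) / 2))"
      by (subst euclidean_inner) (simp add: power2_eq_square exp_sum[symmetric] sum_divide_distrib sum_negf)
    also have "\<dots> = (\<Prod>b\<in>(Basis::'a set). sqrt (2 * pi) * std_normal_density (z \<bullet> b))"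
      by (simp add: std_normal_density_def)
    finally show ?thesis
      by (simp add: prod.distrib ennreal_mult prod_ennreal prod_nonneg)
  qed
  moreover have "(\<integral>\<^sup>+z. (\<Prod>b\<in>(Basis::'a set). ennreal (std_normal_density (z \<bullet> b))) \<partial>lborel) = 1"
  proof -
    have "(\<integral>\<^sup>+x. ennreal (std_normal_density x) \<partial>lborel) = 1"
      by (subst nn_integral_eq_integral) auto
    then show ?thesis
      by (subst nn_integral_lborel_prod) auto
  qed
  ultimately show ?thesis
    by (simp add: nn_integral_cmult)
qed

lemma mvn_density_borel_measurable [measurable]: "mvn_density mu S \<in> borel_measurable borel"
proof -
  have "continuous_on UNIV (\<lambda>x. matrix_inv S *v (x - mu))"
    by (intro continuous_on_compose2[OF matrix_vector_mult_linear_continuous_on] continuous_intros) auto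
  then show ?thesis
    unfolding mvn_density_def divide_inverse by (intro borel_measurable_continuous_onI continuous_intros)
qed

lemma mvn_density_nonneg: "pos_def_matrix S \<Longrightarrow> 0 \<le> mvn_density mu S x"
  using pos_def_matrix_det_pos[of S] by (simp add: mvn_density_def)

lemma mvn_density_whitened:
  fixes S A :: "real^'n^'n"
  assumes "pos_def_matrix S" and A: "transpose A ** matrix_inv S ** A = mat 1"
  shows "mvn_density mu S (mu + A *v z) = exp (- (z \<bullet> z) / 2) / (sqrt (2 * pi) ^ CARD('n) * \<bar>det A\<bar>)"
proof -
  have "(A *v z) \<bullet> (matrix_inv S *v (A *v z)) = (z v* transpose A) \<bullet> (matrix_inv S *v (A *v z))"
    by simp
  also have "\<dots> = z \<bullet> ((transpose A ** matrix_inv S ** A) *v z)"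
    by (simp only: dot_lmul_matrix matrix_vector_mul_assoc matrix_mul_assoc)
  finally have "(A *v z) \<bullet> (matrix_inv S *v (A *v z)) = z \<bullet> z"
    by (simp add: A)
  moreover have "sqrt ((2 * pi) ^ CARD('n) * det S) = sqrt (2 * pi) ^ CARD('n) * \<bar>det A\<bar>"
    unfolding det_congruent_inv_mat_1[OF assms] real_sqrt_mult real_sqrt_abs
    unfolding real_sqrt_power by (simp add: real_sqrt_mult)
  ultimately show ?thesis
    by (simp add: mvn_density_def)
qed

lemma nn_integral_mvn_density:
  fixes S :: "real^'n^'n"
  assumes S: "pos_def_matrix S"
  shows "(\<integral>\<^sup>+x. ennreal (mvn_density mu S x) \<partial>lborel) = 1"
proof -
  obtain A :: "real^'n^'n" where A: "transpose A ** matrix_inv S ** A = mat 1"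
    using pos_def_matrix_congruent_mat_1[OF pos_def_matrix_inv[OF S]] by blast
  define Z where "Z = sqrt (2 * pi) ^ CARD('n) * \<bar>det A\<bar>"
  have dA: "det A \<noteq> 0"
    using pos_def_matrix_det_pos[OF S] det_congruent_inv_mat_1[OF S A] by auto
  then have "Z > 0"
    by (simp add: Z_def)
  have "(\<integral>\<^sup>+x. ennreal (mvn_density mu S x) \<partial>lborel)
      = ennreal \<bar>det A\<bar> * (\<integral>\<^sup>+z. ennreal (mvn_density mu S (mu + A *v z)) \<partial>lborel)"
    using nn_integral_lborel_affine[of "(*v) A" "\<lambda>x. ennreal (mvn_density mu S x)" mu] dA
    by (simp add: matrix_vector_mul_linear)
  also have "(\<lambda>z. ennreal (mvn_density mu S (mu + A *v z))) = (\<lambda>z. ennreal (1 / Z) * ennreal (exp (- (z \<bullet> z) / 2)))"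
    using \<open>Z > 0\<close> by (simp add: mvn_density_whitened[OF S A] Z_def[symmetric] ennreal_mult[symmetric])
  also have "(\<integral>\<^sup>+z. ennreal (1 / Z) * ennreal (exp (- (z \<bullet> z) / 2)) \<partial>(lborel :: (real^'n) measure))
      = ennreal (1 / Z) * ennreal (sqrt (2 * pi) ^ CARD('n))"
    using nn_integral_lborel_exp_neg_inner_half[where 'a="real^'n"] by (subst nn_integral_cmult) auto
  also have "ennreal \<bar>det A\<bar> * (ennreal (1 / Z) * ennreal (sqrt (2 * pi) ^ CARD('n))) = 1"
    using \<open>Z > 0\<close> dA by (simp add: Z_def ennreal_mult[symmetric] del: ennreal_mult')
  finally show ?thesis .
qed

section \<open>Couplings through a measure-preserving involution\<close>

lemma ennreal_min_add_diff:
  fixes a b :: real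
  assumes "0 \<le> a" "0 \<le> b"
  shows "ennreal (min a b) + ennreal (a - b) = ennreal a"
    and "ennreal (min a b) + ennreal (b - a) = ennreal b"
  using assms by (auto simp: min_def ennreal_neg ennreal_plus[symmetric] simp del: ennreal_plus)

lemma emeasure_density_split:
  assumes [measurable]: "f \<in> borel_measurable M" "g \<in> borel_measurable M" "A \<in> sets M"
    and nonneg: "\<And>x. x \<in> space M \<Longrightarrow> 0 \<le> f x" "\<And>x. x \<in> space M \<Longrightarrow> 0 \<le> g x"
  shows "emeasure (density M (\<lambda>x. ennreal (f x))) A
      = (\<integral>\<^sup>+x. ennreal (min (f x) (g x)) * indicator A x \<partial>M) + (\<integral>\<^sup>+x. ennreal (f x - g x) * indicator A x \<partial>M)"
    and "emeasure (density M (\<lambda>x. ennreal (g x))) A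
      = (\<integral>\<^sup>+x. ennreal (min (f x) (g x)) * indicator A x \<partial>M) + (\<integral>\<^sup>+x. ennreal (g x - f x) * indicator A x \<partial>M)"
proof -
  have "ennreal (f x) = ennreal (min (f x) (g x)) + ennreal (f x - g x)"
    and "ennreal (g x) = ennreal (min (f x) (g x)) + ennreal (g x - f x)" if "x \<in> space M" for x
    using ennreal_min_add_diff nonneg[OF that] by metis+
  then show "emeasure (density M (\<lambda>x. ennreal (f x))) A
      = (\<integral>\<^sup>+x. ennreal (min (f x) (g x)) * indicator A x \<partial>M) + (\<integral>\<^sup>+x. ennreal (f x - g x) * indicator A x \<partial>M)"
    and "emeasure (density M (\<lambda>x. ennreal (g x))) A
      = (\<integral>\<^sup>+x. ennreal (min (f x) (g x)) * indicator A x \<partial>M) + (\<integral>\<^sup>+x. ennreal (g x - f x) * indicator A x \<partial>M)"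
    by (auto simp: emeasure_density distrib_right nn_integral_add[symmetric] intro!: nn_integral_cong)
qed

definition add_measure :: "'a measure \<Rightarrow> 'a measure \<Rightarrow> 'a measure" where
  "add_measure M N = measure_of (space M) (sets M) (\<lambda>A. emeasure M A + emeasure N A)"

lemma sets_add_measure [simp]: "sets (add_measure M N) = sets M"
  unfolding add_measure_def by (rule sets.sets_measure_of_eq)

lemma emeasure_add_measure:
  assumes N: "sets N = sets M" and A: "A \<in> sets M"
  shows "emeasure (add_measure M N) A = emeasure M A + emeasure N A"
  unfolding add_measure_def
proof (rule emeasure_measure_of_sigma[OF sets.sigma_algebra_axioms _ _ A])
  show "positive (sets M) (\<lambda>A. emeasure M A + emeasure N A)"
    by (simp add: positive_def)
  show "countably_additive (sets M) (\<lambda>A. emeasure M A + emeasure N A)"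
    unfolding countably_additive_def
  proof safe
    fix F :: "nat \<Rightarrow> 'a set"
    assume F: "range F \<subseteq> sets M" "disjoint_family F" "\<Union>(range F) \<in> sets M"
    then have "(\<Sum>i. emeasure M (F i)) = emeasure M (\<Union>(range F))"
      and "(\<Sum>i. emeasure N (F i)) = emeasure N (\<Union>(range F))"
      using N by (auto intro!: suminf_emeasure)
    then show "(\<Sum>i. emeasure M (F i) + emeasure N (F i)) = emeasure M (\<Union>(range F)) + emeasure N (\<Union>(range F))"
      by (simp add: suminf_add[OF summableI summableI, symmetric])
  qed
qed

lemma distr_fst_eqI:
  assumes C: "sets C = sets (M \<Otimes>\<^sub>M N)" and P: "sets P = sets M"
    and rectangles: "\<And>A. A \<in> sets M \<Longrightarrow> emeasure C (A \<times> space N) = emeasure P A"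
  shows "distr C P fst = P"
proof (rule measure_eqI)
  fix A
  assume "A \<in> sets (distr C P fst)"
  then have A: "A \<in> sets M"
    using P by simp
  have "fst -` A \<inter> space C = A \<times> space N"
    using sets.sets_into_space[OF A] by (auto simp: sets_eq_imp_space_eq[OF C] space_pair_measure)
  moreover have "fst \<in> C \<rightarrow>\<^sub>M P"
    using measurable_fst[of M N] by (simp add: measurable_cong_sets[OF C P])
  ultimately show "emeasure (distr C P fst) A = emeasure P A"
    using A P by (simp add: emeasure_distr rectangles)
qed simp

lemma distr_snd_eqI:
  assumes C: "sets C = sets (M \<Otimes>\<^sub>M N)" and Q: "sets Q = sets N"
    and rectangles: "\<And>A. A \<in> sets N \<Longrightarrow> emeasure C (space M \<times> A) = emeasure Q A"
  shows "distr C Q snd = Q"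
proof (rule measure_eqI)
  fix A
  assume "A \<in> sets (distr C Q snd)"
  then have A: "A \<in> sets N"
    using Q by simp
  have "snd -` A \<inter> space C = space M \<times> A"
    using sets.sets_into_space[OF A] by (auto simp: sets_eq_imp_space_eq[OF C] space_pair_measure)
  moreover have "snd \<in> C \<rightarrow>\<^sub>M Q"
    using measurable_snd[of M N] by (simp add: measurable_cong_sets[OF C Q])
  ultimately show "emeasure (distr C Q snd) A = emeasure Q A"
    using A Q by (simp add: emeasure_distr rectangles)
qed simp

text \<open>
If \<open>R\<close> is a measure-preserving involution with \<open>f \<circ> R = g\<close>, moving the excess \<open>(f - g)\<^sup>+\<close> along
\<open>R\<close> produces exactly the excess \<open>(g - f)\<^sup>+\<close>, so the second marginal is \<open>g\<close>.
\<close>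

definition reflection_coupling ::
    "'a measure \<Rightarrow> ('a \<Rightarrow> real) \<Rightarrow> ('a \<Rightarrow> real) \<Rightarrow> ('a \<Rightarrow> 'a) \<Rightarrow> ('a \<times> 'a) measure" where
  "reflection_coupling M f g R = add_measure
     (distr (density M (\<lambda>x. ennreal (min (f x) (g x)))) (M \<Otimes>\<^sub>M M) (\<lambda>x. (x, x)))
     (distr (density M (\<lambda>x. ennreal (f x - g x))) (M \<Otimes>\<^sub>M M) (\<lambda>x. (x, R x)))"

lemma sets_reflection_coupling [simp]: "sets (reflection_coupling M f g R) = sets (M \<Otimes>\<^sub>M M)"
  by (simp add: reflection_coupling_def)

lemma emeasure_reflection_coupling:
  assumes [measurable]: "f \<in> borel_measurable M" "g \<in> borel_measurable M" "R \<in> M \<rightarrow>\<^sub>M M"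
    and E [measurable]: "E \<in> sets (M \<Otimes>\<^sub>M M)"
  shows "emeasure (reflection_coupling M f g R) E
     = (\<integral>\<^sup>+x. ennreal (min (f x) (g x)) * indicator E (x, x) \<partial>M)
     + (\<integral>\<^sup>+x. ennreal (f x - g x) * indicator E (x, R x) \<partial>M)"
proof -
  have emeasure_graph: "emeasure (distr (density M (\<lambda>x. ennreal (h x))) (M \<Otimes>\<^sub>M M) (\<lambda>x. (x, T x))) E
      = (\<integral>\<^sup>+x. ennreal (h x) * indicator E (x, T x) \<partial>M)"
    if [measurable]: "h \<in> borel_measurable M" "T \<in> M \<rightarrow>\<^sub>M M" for h T
  proof -
    have "(\<lambda>x. (x, T x)) -` E \<inter> space M \<in> sets M"
      by measurable
    then show ?thesis
      by (simp add: emeasure_distr emeasure_density indicator_def cong: nn_integral_cong)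
  qed
  show ?thesis
    unfolding reflection_coupling_def
    using emeasure_graph[of "\<lambda>x. min (f x) (g x)" "\<lambda>x. x"] emeasure_graph[of "\<lambda>x. f x - g x" R]
    by (simp add: emeasure_add_measure)
qed

lemma emeasure_reflection_coupling_fst:
  assumes [measurable]: "f \<in> borel_measurable M" "g \<in> borel_measurable M" "R \<in> M \<rightarrow>\<^sub>M M" "A \<in> sets M"
    and nonneg: "\<And>x. x \<in> space M \<Longrightarrow> 0 \<le> f x" "\<And>x. x \<in> space M \<Longrightarrow> 0 \<le> g x"
  shows "emeasure (reflection_coupling M f g R) (A \<times> space M) = emeasure (density M (\<lambda>x. ennreal (f x))) A"
proof -
  have "emeasure (reflection_coupling M f g R) (A \<times> space M)
      = (\<integral>\<^sup>+x. ennreal (min (f x) (g x)) * indicator A x \<partial>M) + (\<integral>\<^sup>+x. ennreal (f x - g x) * indicator A x \<partial>M)"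
    by (simp add: emeasure_reflection_coupling measurable_space[OF assms(3)] indicator_def
        cong: nn_integral_cong)
  then show ?thesis
    using emeasure_density_split(1)[OF assms(1,2,4) nonneg] by (simp only:)
qed

lemma emeasure_reflection_coupling_snd:
  assumes [measurable]: "f \<in> borel_measurable M" "g \<in> borel_measurable M" "R \<in> M \<rightarrow>\<^sub>M M" "A \<in> sets M"
    and nonneg: "\<And>x. x \<in> space M \<Longrightarrow> 0 \<le> f x" "\<And>x. x \<in> space M \<Longrightarrow> 0 \<le> g x"
    and RR: "\<And>x. x \<in> space M \<Longrightarrow> R (R x) = x"
    and fR: "\<And>x. x \<in> space M \<Longrightarrow> f (R x) = g x"
    and R_preserving: "\<And>h. h \<in> borel_measurable M \<Longrightarrow> (\<integral>\<^sup>+x. h (R x) \<partial>M) = (\<integral>\<^sup>+x. h x \<partial>M)"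
  shows "emeasure (reflection_coupling M f g R) (space M \<times> A) = emeasure (density M (\<lambda>x. ennreal (g x))) A"
proof -
  have R_space: "R x \<in> space M" if "x \<in> space M" for x
    using measurable_space[OF assms(3) that] .
  have gR: "g (R x) = f x" if "x \<in> space M" for x
    using fR[OF R_space[OF that]] RR[OF that] by simp
  have "(\<integral>\<^sup>+x. ennreal (f x - g x) * indicator A (R x) \<partial>M)
      = (\<integral>\<^sup>+x. ennreal (g (R x) - f (R x)) * indicator A (R x) \<partial>M)"
    by (intro nn_integral_cong) (simp add: fR gR)
  also have "\<dots> = (\<integral>\<^sup>+x. ennreal (g x - f x) * indicator A x \<partial>M)"
    by (rule R_preserving[where h="\<lambda>x. ennreal (g x - f x) * indicator A x"]) measurable
  finally have "emeasure (reflection_coupling M f g R) (space M \<times> A)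
      = (\<integral>\<^sup>+x. ennreal (min (f x) (g x)) * indicator A x \<partial>M) + (\<integral>\<^sup>+x. ennreal (g x - f x) * indicator A x \<partial>M)"
    by (simp add: emeasure_reflection_coupling R_space indicator_def cong: nn_integral_cong)
  then show ?thesis
    using emeasure_density_split(2)[OF assms(1,2,4) nonneg] by (simp only:)
qed

lemma coupling_reflection_coupling:
  assumes [measurable]: "f \<in> borel_measurable M" "g \<in> borel_measurable M" "R \<in> M \<rightarrow>\<^sub>M M"
    and nonneg: "\<And>x. x \<in> space M \<Longrightarrow> 0 \<le> f x" "\<And>x. x \<in> space M \<Longrightarrow> 0 \<le> g x"
    and f1: "(\<integral>\<^sup>+x. ennreal (f x) \<partial>M) = 1"
    and RR: "\<And>x. x \<in> space M \<Longrightarrow> R (R x) = x"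
    and fR: "\<And>x. x \<in> space M \<Longrightarrow> f (R x) = g x"
    and R_preserving: "\<And>h. h \<in> borel_measurable M \<Longrightarrow> (\<integral>\<^sup>+x. h (R x) \<partial>M) = (\<integral>\<^sup>+x. h x \<partial>M)"
  shows "coupling (reflection_coupling M f g R) (density M (\<lambda>x. ennreal (f x))) (density M (\<lambda>x. ennreal (g x)))"
  unfolding coupling_def
proof (intro conjI)
  let ?C = "reflection_coupling M f g R"
  show "sets ?C = sets (density M (\<lambda>x. ennreal (f x)) \<Otimes>\<^sub>M density M (\<lambda>x. ennreal (g x)))"
    unfolding sets_reflection_coupling by (rule sets_pair_measure_cong) simp_all
  have "space ?C = space M \<times> space M"
    using sets_eq_imp_space_eq[OF sets_reflection_coupling] by (simp add: space_pair_measure)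
  then show "prob_space ?C"
    using emeasure_reflection_coupling_fst[OF assms(1-3) sets.top nonneg] f1
    by (intro prob_spaceI) (simp add: emeasure_density cong: nn_integral_cong)
  show "distr ?C (density M (\<lambda>x. ennreal (f x))) fst = density M (\<lambda>x. ennreal (f x))"
    by (rule distr_fst_eqI[OF sets_reflection_coupling]) (simp_all add: emeasure_reflection_coupling_fst nonneg)
  show "distr ?C (density M (\<lambda>x. ennreal (g x))) snd = density M (\<lambda>x. ennreal (g x))"
    by (rule distr_snd_eqI[OF sets_reflection_coupling])
       (simp_all add: emeasure_reflection_coupling_snd nonneg RR fR R_preserving)
qed

lemma coordinate_neq_sets: "{p :: (real^'n) \<times> (real^'n). fst p $ j \<noteq> snd p $ j} \<in> sets (lborel \<Otimes>\<^sub>M lborel)"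
proof -
  have "{p :: (real^'n) \<times> (real^'n). fst p $ j \<noteq> snd p $ j}
      = space (borel \<Otimes>\<^sub>M borel) - {p \<in> space (borel \<Otimes>\<^sub>M borel). fst p $ j = snd p $ j}"
    by (auto simp: space_pair_measure)
  also have "\<dots> \<in> sets (borel \<Otimes>\<^sub>M borel)"
    by (intro sets.compl_sets borel_measurable_eq measurable_compose[OF measurable_fst borel_measurable_nth]
        measurable_compose[OF measurable_snd borel_measurable_nth])
  also have "sets (borel \<Otimes>\<^sub>M borel) = sets (lborel \<Otimes>\<^sub>M (lborel :: (real^'n) measure))"
    by (rule sets_pair_measure_cong) simp_all
  finally show ?thesis .
qed

lemma measure_reflection_coupling_coordinate_neq:
  fixes f g :: "real^'n \<Rightarrow> real" and R :: "real^'n \<Rightarrow> real^'n"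
  assumes "f \<in> borel_measurable borel" "g \<in> borel_measurable borel" "R \<in> borel_measurable borel"
  shows "measure (reflection_coupling lborel f g R) {p. fst p $ j \<noteq> snd p $ j}
       = enn2real (\<integral>\<^sup>+x. ennreal (f x - g x) * indicator {x. x $ j \<noteq> R x $ j} x \<partial>lborel)"
proof -
  have "emeasure (reflection_coupling lborel f g R) {p. fst p $ j \<noteq> snd p $ j}
      = (\<integral>\<^sup>+x. ennreal (min (f x) (g x)) * indicator {p. fst p $ j \<noteq> snd p $ j} (x, x) \<partial>lborel)
      + (\<integral>\<^sup>+x. ennreal (f x - g x) * indicator {p. fst p $ j \<noteq> snd p $ j} (x, R x) \<partial>lborel)"
    using assms coordinate_neq_sets by (intro emeasure_reflection_coupling) simp_all
  then show ?thesis
    by (simp add: measure_def indicator_def)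
qed

section \<open>Total variation distance of densities\<close>

lemma measure_density_diff:
  assumes [measurable]: "f \<in> borel_measurable M" "g \<in> borel_measurable M" "A \<in> sets M"
    and nonneg: "\<And>x. x \<in> space M \<Longrightarrow> 0 \<le> f x" "\<And>x. x \<in> space M \<Longrightarrow> 0 \<le> g x"
    and f1: "(\<integral>\<^sup>+x. ennreal (f x) \<partial>M) = 1" and g1: "(\<integral>\<^sup>+x. ennreal (g x) \<partial>M) = 1"
  shows "measure (density M (\<lambda>x. ennreal (f x))) A - measure (density M (\<lambda>x. ennreal (g x))) A
       = enn2real (\<integral>\<^sup>+x. ennreal (f x - g x) * indicator A x \<partial>M)
       - enn2real (\<integral>\<^sup>+x. ennreal (g x - f x) * indicator A x \<partial>M)"
proof -
  have le_1: "emeasure (density M (\<lambda>x. ennreal (h x))) A \<le> 1"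
    if [measurable]: "h \<in> borel_measurable M" and "(\<integral>\<^sup>+x. ennreal (h x) \<partial>M) = 1" for h
    using emeasure_space[of "density M (\<lambda>x. ennreal (h x))" A] that
    by (simp add: emeasure_density cong: nn_integral_cong)
  have summands_finite: "a < \<top> \<and> b < \<top>" if "a + b \<le> 1" for a b :: ennreal
    using that by (auto simp: less_top[symmetric] top_unique)
  show ?thesis
    using emeasure_density_split[OF assms(1-3) nonneg] le_1[OF _ f1] le_1[OF _ g1] summands_finite
    by (simp add: measure_def enn2real_plus)
qed

lemma nn_integral_excess_symmetric:
  assumes [measurable]: "f \<in> borel_measurable M" "g \<in> borel_measurable M"
    and nonneg: "\<And>x. x \<in> space M \<Longrightarrow> 0 \<le> f x" "\<And>x. x \<in> space M \<Longrightarrow> 0 \<le> g x"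
    and f1: "(\<integral>\<^sup>+x. ennreal (f x) \<partial>M) = 1" and g1: "(\<integral>\<^sup>+x. ennreal (g x) \<partial>M) = 1"
  shows "(\<integral>\<^sup>+x. ennreal (g x - f x) \<partial>M) = (\<integral>\<^sup>+x. ennreal (f x - g x) \<partial>M)"
proof -
  let ?common = "\<integral>\<^sup>+x. ennreal (min (f x) (g x)) \<partial>M"
  have total: "?common + (\<integral>\<^sup>+x. ennreal (f x - g x) \<partial>M) = 1" "?common + (\<integral>\<^sup>+x. ennreal (g x - f x) \<partial>M) = 1"
    using emeasure_density_split[OF assms(1,2) sets.top nonneg] f1 g1
    by (simp_all add: emeasure_density cong: nn_integral_cong)
  then have "?common + (\<integral>\<^sup>+x. ennreal (g x - f x) \<partial>M) = ?common + (\<integral>\<^sup>+x. ennreal (f x - g x) \<partial>M)"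
    by simp
  moreover have "?common \<noteq> \<top>"
    using total(1) by (cases "?common = \<top>") simp_all
  ultimately show ?thesis
    by (simp add: ennreal_add_left_cancel)
qed

lemma nn_integral_excess_finite:
  assumes [measurable]: "f \<in> borel_measurable M" "g \<in> borel_measurable M"
    and nonneg: "\<And>x. x \<in> space M \<Longrightarrow> 0 \<le> f x" "\<And>x. x \<in> space M \<Longrightarrow> 0 \<le> g x"
    and f1: "(\<integral>\<^sup>+x. ennreal (f x) \<partial>M) = 1"
  shows "(\<integral>\<^sup>+x. ennreal (f x - g x) \<partial>M) < \<top>"
proof -
  have "(\<integral>\<^sup>+x. ennreal (min (f x) (g x)) \<partial>M) + (\<integral>\<^sup>+x. ennreal (f x - g x) \<partial>M) = 1"
    using emeasure_density_split(1)[OF assms(1,2) sets.top nonneg] f1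
    by (simp add: emeasure_density cong: nn_integral_cong)
  then show ?thesis
    by (cases "(\<integral>\<^sup>+x. ennreal (f x - g x) \<partial>M) = \<top>") (simp_all add: less_top[symmetric])
qed

lemma enn2real_nn_integral_indicator_le:
  assumes "(\<integral>\<^sup>+x. h x \<partial>M) < \<top>"
  shows "enn2real (\<integral>\<^sup>+x. h x * indicator A x \<partial>M) \<le> enn2real (\<integral>\<^sup>+x. h x \<partial>M)"
  using assms by (intro enn2real_mono) (auto simp: indicator_def intro!: nn_integral_mono)

lemma tv_dist_density:
  assumes [measurable]: "f \<in> borel_measurable M" "g \<in> borel_measurable M"
    and nonneg: "\<And>x. x \<in> space M \<Longrightarrow> 0 \<le> f x" "\<And>x. x \<in> space M \<Longrightarrow> 0 \<le> g x"
    and f1: "(\<integral>\<^sup>+x. ennreal (f x) \<partial>M) = 1" and g1: "(\<integral>\<^sup>+x. ennreal (g x) \<partial>M) = 1"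
  shows "tv_dist (density M (\<lambda>x. ennreal (f x))) (density M (\<lambda>x. ennreal (g x)))
       = enn2real (\<integral>\<^sup>+x. ennreal (f x - g x) \<partial>M)"
proof -
  let ?P = "density M (\<lambda>x. ennreal (f x))" and ?Q = "density M (\<lambda>x. ennreal (g x))"
  let ?d = "enn2real (\<integral>\<^sup>+x. ennreal (f x - g x) \<partial>M)"
  have le: "\<bar>measure ?P A - measure ?Q A\<bar> \<le> ?d" if "A \<in> sets M" for A
  proof -
    have finite: "(\<integral>\<^sup>+x. ennreal (f x - g x) \<partial>M) < \<top>" "(\<integral>\<^sup>+x. ennreal (g x - f x) \<partial>M) < \<top>"
      using nn_integral_excess_finite[OF assms(1,2) nonneg f1]
        nn_integral_excess_finite[OF assms(2,1) nonneg(2,1) g1] by auto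
    have "enn2real (\<integral>\<^sup>+x. ennreal (g x - f x) * indicator A x \<partial>M) \<le> ?d"
      using enn2real_nn_integral_indicator_le[OF finite(2), of A] nn_integral_excess_symmetric[OF assms]
      by simp
    then show ?thesis
      using measure_density_diff[OF assms(1,2) that nonneg f1 g1]
        enn2real_nn_integral_indicator_le[OF finite(1), of A]
        enn2real_nonneg[of "\<integral>\<^sup>+x. ennreal (f x - g x) * indicator A x \<partial>M"]
        enn2real_nonneg[of "\<integral>\<^sup>+x. ennreal (g x - f x) * indicator A x \<partial>M"]
      unfolding abs_le_iff by linarith
  qed
  define A0 where "A0 = {x \<in> space M. g x < f x}"
  have A0: "A0 \<in> sets M"
    unfolding A0_def by measurable
  have "(\<integral>\<^sup>+x. ennreal (f x - g x) * indicator A0 x \<partial>M) = (\<integral>\<^sup>+x. ennreal (f x - g x) \<partial>M)"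
    by (auto simp: A0_def indicator_def ennreal_neg intro!: nn_integral_cong)
  moreover have "(\<integral>\<^sup>+x. ennreal (g x - f x) * indicator A0 x \<partial>M) = 0"
    unfolding A0_def by (rule nn_integral_zero') (auto simp: indicator_def ennreal_neg)
  ultimately have "\<bar>measure ?P A0 - measure ?Q A0\<bar> = ?d"
    using measure_density_diff[OF assms(1,2) A0 nonneg f1 g1] by simp
  then show ?thesis
    unfolding tv_dist_def sets_density using A0 le
    by (intro cSup_eq_maximum) (auto intro!: image_eqI[where x=A0])
qed

section \<open>Reflections with respect to a quadratic form\<close>

text \<open>The reflection in the hyperplane through \<open>c\<close> that is orthogonal to \<open>e\<close> for \<open>x \<bullet> P y\<close>.\<close>

definition form_reflection :: "real^'n^'n \<Rightarrow> real^'n \<Rightarrow> real^'n \<Rightarrow> real^'n \<Rightarrow> real^'n" where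
  "form_reflection P e c x = x - (2 * (e \<bullet> (P *v (x - c))) / (e \<bullet> (P *v e))) *\<^sub>R e"

lemma form_reflection_involution:
  assumes "e \<bullet> (P *v e) \<noteq> 0"
  shows "form_reflection P e c (form_reflection P e c x) = x"
proof -
  define s where "s x = 2 * (e \<bullet> (P *v (x - c))) / (e \<bullet> (P *v e))" for x
  have R: "form_reflection P e c x = x - s x *\<^sub>R e" for x
    by (simp add: form_reflection_def s_def)
  have "s (x - s x *\<^sub>R e) = - s x"
    using assms by (simp add: s_def algebra_simps matrix_vector_mult_diff_distrib
        matrix_vector_mult_scaleR inner_diff_right field_simps)
  then show ?thesis
    by (simp add: R)
qed

lemma form_reflection_isometry:
  assumes "transpose P = P" and "e \<bullet> (P *v e) \<noteq> 0"
  shows "(form_reflection P e c x - form_reflection P e c y) \<bullet> (P *v (form_reflection P e c x - form_reflection P e c y))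
       = (x - y) \<bullet> (P *v (x - y))"
proof -
  let ?R = "form_reflection P e c"
  define z where "z = x - y"
  define t where "t = 2 * (e \<bullet> (P *v z)) / (e \<bullet> (P *v e))"
  have "?R x - ?R y = z - t *\<^sub>R e"
    by (simp add: form_reflection_def z_def t_def matrix_vector_mult_diff_distrib inner_diff_right
        diff_divide_distrib scaleR_diff_left algebra_simps)
  moreover have "z \<bullet> (P *v e) = e \<bullet> (P *v z)"
    by (rule symmetric_matrix_inner_commute[OF assms(1)])
  then have "(z - t *\<^sub>R e) \<bullet> (P *v (z - t *\<^sub>R e))
      = z \<bullet> (P *v z) + (- 2 * t * (e \<bullet> (P *v z)) + t * t * (e \<bullet> (P *v e)))"
    by (simp add: matrix_vector_mult_diff_distrib matrix_vector_mult_scaleR inner_diff_left inner_diff_right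
        algebra_simps)
  ultimately have "(?R x - ?R y) \<bullet> (P *v (?R x - ?R y))
      = z \<bullet> (P *v z) + (- 2 * t * (e \<bullet> (P *v z)) + t * t * (e \<bullet> (P *v e)))"
    by simp
  also have "- 2 * t * (e \<bullet> (P *v z)) + t * t * (e \<bullet> (P *v e)) = 0"
    using assms(2) by (simp add: t_def field_simps power2_eq_square)
  finally show ?thesis
    by (simp add: z_def)
qed

lemma form_reflection_midpoint:
  assumes "e \<bullet> (P *v e) \<noteq> 0"
  shows "form_reflection P e (a + (t / 2) *\<^sub>R e) a = a + t *\<^sub>R e"
proof -
  have "a - (a + (t / 2) *\<^sub>R e) = (- t / 2) *\<^sub>R e"
    by simp
  then have "e \<bullet> (P *v (a - (a + (t / 2) *\<^sub>R e))) = - t / 2 * (e \<bullet> (P *v e))"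
    by (simp only: matrix_vector_mult_scaleR inner_scaleR_right)
  then show ?thesis
    using assms by (simp add: form_reflection_def)
qed

lemma form_reflection_nth: "e $ j = 0 \<Longrightarrow> form_reflection P e c x $ j = x $ j"
  by (simp add: form_reflection_def)

lemma form_reflection_eq_self:
  "e $ i \<noteq> 0 \<Longrightarrow> form_reflection P e c x $ i = x $ i \<Longrightarrow> form_reflection P e c x = x"
  by (simp add: form_reflection_def)

lemma linear_form_reflection: "linear (form_reflection P e 0)"
  by (rule linearI)
     (simp_all add: form_reflection_def matrix_vector_right_distrib matrix_vector_mult_scaleR
      inner_add_right add_divide_distrib scaleR_add_left algebra_simps)

lemma form_reflection_affine:
  "form_reflection P e c x = (c - form_reflection P e 0 c) + form_reflection P e 0 x"
  by (simp add: form_reflection_def matrix_vector_mult_diff_distrib inner_diff_right diff_divide_distrib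
      scaleR_diff_left algebra_simps)

lemma form_reflection_borel_measurable [measurable]: "form_reflection P e c \<in> borel_measurable borel"
proof -
  have "form_reflection P e c = (\<lambda>x. (c - form_reflection P e 0 c) + form_reflection P e 0 x)"
    by (rule ext) (rule form_reflection_affine)
  moreover have [measurable]: "form_reflection P e 0 \<in> borel_measurable borel"
    by (rule linear_borel_measurable[OF linear_form_reflection])
  ultimately show ?thesis
    by simp
qed

lemma nn_integral_lborel_form_reflection:
  assumes "e \<bullet> (P *v e) \<noteq> 0" and "f \<in> borel_measurable borel"
  shows "(\<integral>\<^sup>+x. f (form_reflection P e c x) \<partial>lborel) = (\<integral>\<^sup>+x. f x \<partial>lborel)"
proof -
  let ?L = "form_reflection P e 0"
  have "\<bar>det (matrix ?L)\<bar> = 1"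
    using abs_det_matrix_involution[OF linear_form_reflection] form_reflection_involution[OF assms(1)] by blast
  then show ?thesis
    using nn_integral_lborel_affine[OF linear_form_reflection _ assms(2), of P e "c - ?L c"]
    by (simp add: form_reflection_affine[of P e c])
qed

lemma mvn_density_form_reflection:
  fixes S :: "real^'n^'n"
  assumes "pos_def_matrix S" and "e \<noteq> 0"
  shows "mvn_density mu S (form_reflection (matrix_inv S) e c x)
       = mvn_density (form_reflection (matrix_inv S) e c mu) S x"
proof -
  let ?P = "matrix_inv S" and ?R = "form_reflection (matrix_inv S) e c"
  have sym: "transpose ?P = ?P" and pos: "e \<bullet> (?P *v e) \<noteq> 0"
    using pos_def_matrix_inv[OF assms(1)] assms(2) by (auto simp: pos_def_matrix_def)
  have "(?R x - mu) \<bullet> (?P *v (?R x - mu)) = (?R x - ?R (?R mu)) \<bullet> (?P *v (?R x - ?R (?R mu)))"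
    by (simp add: form_reflection_involution[OF pos])
  also have "\<dots> = (x - ?R mu) \<bullet> (?P *v (x - ?R mu))"
    by (rule form_reflection_isometry[OF sym pos])
  finally show ?thesis
    by (simp add: mvn_density_def)
qed

lemma mvn_coordinate_reflection:
  fixes S :: "real^'n^'n" and i :: 'n and mu :: "real^'n" and m' :: real
  assumes S: "pos_def_matrix S"
  defines "R \<equiv> form_reflection (matrix_inv S) (axis i 1) (mu + ((m' - mu $ i) / 2) *\<^sub>R axis i 1)"
  shows "\<And>x. R (R x) = x"
    and "\<And>x. mvn_density mu S (R x) = mvn_density (\<chi> j. if j = i then m' else mu $ j) S x"
    and "\<And>h. h \<in> borel_measurable borel \<Longrightarrow> (\<integral>\<^sup>+x. h (R x) \<partial>lborel) = (\<integral>\<^sup>+x. h x \<partial>lborel)"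
    and "\<And>x j. j \<noteq> i \<Longrightarrow> R x $ j = x $ j"
    and "\<And>x. R x $ i = x $ i \<Longrightarrow> R x = x"
proof -
  have e: "axis i 1 \<noteq> (0 :: real^'n)" "axis i 1 $ i = (1 :: real)" "\<And>j. j \<noteq> i \<Longrightarrow> axis i 1 $ j = (0 :: real)"
    by simp (simp_all add: axis_def)
  have "axis i 1 \<bullet> (matrix_inv S *v axis i 1) > 0"
    using pos_def_matrix_inv[OF S] e(1) unfolding pos_def_matrix_def by blast
  then have pos: "axis i 1 \<bullet> (matrix_inv S *v axis i 1) \<noteq> 0"
    by simp
  have "mu + (m' - mu $ i) *\<^sub>R axis i 1 = (\<chi> j. if j = i then m' else mu $ j)"
    by (simp add: axis_def vec_eq_iff)
  then show "mvn_density mu S (R x) = mvn_density (\<chi> j. if j = i then m' else mu $ j) S x" for x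
    using mvn_density_form_reflection[OF S e(1)] form_reflection_midpoint[OF pos] by (simp add: R_def)
  show "R (R x) = x" for x
    unfolding R_def by (rule form_reflection_involution[OF pos])
  show "(\<integral>\<^sup>+x. h (R x) \<partial>lborel) = (\<integral>\<^sup>+x. h x \<partial>lborel)" if "h \<in> borel_measurable borel" for h
    unfolding R_def using nn_integral_lborel_form_reflection[OF pos that] .
  show "R x $ j = x $ j" if "j \<noteq> i" for x j
    unfolding R_def using e(3)[OF that] by (rule form_reflection_nth)
  show "R x = x" if "R x $ i = x $ i" for x
    using that unfolding R_def by (rule form_reflection_eq_self[rotated]) (simp add: e)
qed

theorem claim2p3:
  fixes S :: "real^'n^'n" and i :: 'n and mu :: "real^'n" and m' :: real
  assumes "pos_def_matrix S"
  shows "\<exists>C. coupling C (mvn mu S) (mvn (\<chi> j. if j = i then m' else mu $ j) S)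
     \<and> measure C {p. fst p $ i \<noteq> snd p $ i}
         = tv_dist (mvn mu S) (mvn (\<chi> j. if j = i then m' else mu $ j) S)
     \<and> (\<forall>j. j \<noteq> i \<longrightarrow> measure C {p. fst p $ j \<noteq> snd p $ j} = 0)"
proof -
  define mu' where "mu' = (\<chi> j. if j = i then m' else mu $ j)"
  define R where "R = form_reflection (matrix_inv S) (axis i 1) (mu + ((m' - mu $ i) / 2) *\<^sub>R axis i 1)"
  note R = mvn_coordinate_reflection[OF assms, where i=i and mu=mu and m'=m', folded R_def mu'_def]
  have [measurable]: "R \<in> borel_measurable borel"
    by (simp add: R_def)
  let ?f = "mvn_density mu S" and ?g = "mvn_density mu' S"
  let ?C = "reflection_coupling lborel ?f ?g R"
  have "coupling ?C (mvn mu S) (mvn mu' S)"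
    unfolding mvn_def by (rule coupling_reflection_coupling)
      (auto simp: R(1-3) nn_integral_mvn_density[OF assms] mvn_density_nonneg[OF assms])
  moreover have "tv_dist (mvn mu S) (mvn mu' S) = enn2real (\<integral>\<^sup>+x. ennreal (?f x - ?g x) \<partial>lborel)"
    unfolding mvn_def by (rule tv_dist_density)
      (auto simp: nn_integral_mvn_density[OF assms] mvn_density_nonneg[OF assms])
  moreover have "ennreal (?f x - ?g x) * indicator {x. x $ i \<noteq> R x $ i} x = ennreal (?f x - ?g x)" for x
  proof (cases "R x $ i = x $ i")
    case True
    then have "R x = x"
      by (rule R(5))
    then show ?thesis
      using R(2)[of x] by simp
  qed simp
  ultimately show ?thesis
    unfolding mu'_def[symmetric]
    by (intro exI[of _ ?C] conjI allI impI) (simp_all add: measure_reflection_coupling_coordinate_neq R(4))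
qed

end
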